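(* For all $t\in\mathbb N$ and real $\vartheta$ we have $S_{2t}(\vartheta)=D_0(\vartheta)S_t(\vartheta)$ and $S_{2t+1}(\vartheta)=D_1(\vartheta)S_t(\vartheta)$, with \[ S_0(\vartheta)=\Bigl(1,\ 1,\ \tfrac{\mathrm e(\vartheta)+1}{2},\ \tfrac{\mathrm e(\vartheta)+1}{2(2-\mathrm e(-\vartheta))},\ \tfrac{3\mathrm e(\vartheta)+2-\mathrm e(-\vartheta)}{4(2-\mathrm e(-\vartheta))},\ \tfrac{2\mathrm e(2\vartheta)+\mathrm e(\vartheta)+\mathrm e(-\vartheta)}{4(2-\mathrm e(-\vartheta))}\Bigr)^T. \] In particular, $\alpha_{8t}=\alpha_{4t}=\beta_{8t}=\beta_{4t}$ for all $t\in\mathbb N$.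
   Context: Let $\mathsf r(n)$ be the number of (overlapping) occurrences of $\mathtt{11}$ in the binary expansion of $n\in\mathbb N=\{0,1,\dots\}$, and $d(t,n)=\mathsf r(n+t)-\mathsf r(n)$. Let $a_t(k)$, $b_t(k)$ be the asymptotic densities (which exist) of $\{n\in\mathbb N:d(t,2n)=k\}$ and $\{n\in\mathbb N:d(t,2n+1)=k\}$ respectively. Write $\mathrm e(\vartheta)=\exp(i\vartheta)$ and define $\alpha_t(\vartheta)=\sum_{k\in\mathbb Z}a_t(k)\mathrm e(k\vartheta)$, $\beta_t(\vartheta)=\sum_{k\in\mathbb Z}b_t(k)\mathrm e(k\vartheta)$, and $S_t(\vartheta)=(\alpha_{2t}(\vartheta),\beta_{2t}(\vartheta),\alpha_{2t+1}(\vartheta),\beta_{2t+1}(\vartheta),\alpha_{2t+2}(\vartheta),\beta_{2t+2}(\vartheta))^T\in\mathbb C^6$. With $x=\mathrm e(\vartheta)$, define the $6\times6$ matrices \[ D_0(\vartheta)=\frac12\begin{pmatrix}1&1&0&0&0&0\\1&1&0&0&0&0\\1&x&0&0&0&0\\0&0&1&x^{-1}&0&0\\0&0&1&1&0&0\\0&0&x&x^{-1}&0&0\end{pmatrix},\quad D_1(\vartheta)=\frac12\begin{pmatrix}0&0&1&1&0&0\\0&0&x&x^{-1}&0&0\\0&0&x&1&0&0\\0&0&0&0&1&x^{-1}\\0&0&0&0&1&1\\0&0&0&0&1&1\end{pmatrix}. \] *)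

theory Defs
  imports "HOL-Analysis.Analysis"
begin

definition ee :: "real \<Rightarrow> complex" where
  "ee \<theta> = exp (\<i> * complex_of_real \<theta>)"

text \<open>Number of (overlapping) occurrences of 11 in the binary expansion of n:
  positions j such that binary digits j and j+1 of n are both 1.\<close>
definition rr :: "nat \<Rightarrow> nat" where
  "rr n = card {j::nat. odd (n div 2 ^ j) \<and> odd (n div 2 ^ Suc j)}"

definition dd :: "nat \<Rightarrow> nat \<Rightarrow> int" where
  "dd t n = int (rr (n + t)) - int (rr n)"

definition density :: "(nat \<Rightarrow> bool) \<Rightarrow> real" where
  "density P = lim (\<lambda>N. real (card {n. n < N \<and> P n}) / real N)"

definition a_dens :: "nat \<Rightarrow> int \<Rightarrow> real" where
  "a_dens t k = density (\<lambda>n. dd t (2 * n) = k)"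

definition b_dens :: "nat \<Rightarrow> int \<Rightarrow> real" where
  "b_dens t k = density (\<lambda>n. dd t (2 * n + 1) = k)"

definition alpha :: "nat \<Rightarrow> real \<Rightarrow> complex" where
  "alpha t \<theta> = (\<Sum>\<^sub>\<infinity>k\<in>(UNIV::int set). complex_of_real (a_dens t k) * ee (real_of_int k * \<theta>))"

definition beta :: "nat \<Rightarrow> real \<Rightarrow> complex" where
  "beta t \<theta> = (\<Sum>\<^sub>\<infinity>k\<in>(UNIV::int set). complex_of_real (b_dens t k) * ee (real_of_int k * \<theta>))"

definition SS :: "nat \<Rightarrow> real \<Rightarrow> complex ^ 6" where
  "SS t \<theta> = vector [alpha (2*t) \<theta>, beta (2*t) \<theta>, alpha (2*t+1) \<theta>, beta (2*t+1) \<theta>,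
                     alpha (2*t+2) \<theta>, beta (2*t+2) \<theta>]"

definition D0 :: "real \<Rightarrow> complex ^ 6 ^ 6" where
  "D0 \<theta> = (let x = ee \<theta>; M = (vector [
     vector [1, 1, 0, 0, 0, 0],
     vector [1, 1, 0, 0, 0, 0],
     vector [1, x, 0, 0, 0, 0],
     vector [0, 0, 1, inverse x, 0, 0],
     vector [0, 0, 1, 1, 0, 0],
     vector [0, 0, x, inverse x, 0, 0]] :: complex^6^6) in
     (\<chi> i j. M $ i $ j / 2))"

definition D1 :: "real \<Rightarrow> complex ^ 6 ^ 6" where
  "D1 \<theta> = (let x = ee \<theta>; M = (vector [
     vector [0, 0, 1, 1, 0, 0],
     vector [0, 0, x, inverse x, 0, 0],
     vector [0, 0, x, 1, 0, 0],
     vector [0, 0, 0, 0, 1, inverse x],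
     vector [0, 0, 0, 0, 1, 1],
     vector [0, 0, 0, 0, 1, 1]] :: complex^6^6) in
     (\<chi> i j. M $ i $ j / 2))"

end

theory Submission
  imports Defs "HOL-Real_Asymp.Real_Asymp"
begin

(* Appending a binary digit gives r(2n) = r(n) and r(2n+1) = r(n) + [n odd]. Hence, according to
   the parities of t and n, d(t,n) equals d(t',n') up to a shift by -1, 0 or 1, where t' is
   floor(t/2) or floor(t/2) + 1 and n' = floor(n/2). The asymptotic density of a set of naturals is
   the mean of the densities of its even and odd parts, so the densities a_t(k), b_t(k) exist (by
   induction on t) and satisfy linear recursions with shifts in k. Multiplying by e(k theta) and
   summing over k turns a shift by c into the factor e(c theta); this is the matrix recursion.
   The initial vector comes from a_0 = b_0 = [k = 0], with beta_1 obtained by solving the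
   fixed-point equation beta_1 = (alpha_1 + e(-theta) beta_1) / 2. Finally beta_2s = alpha_2s
   for even s, which gives the identities for 4t and 8t. *)

section \<open>Blocks 11 in binary expansions\<close>

definition positions_11 :: "nat \<Rightarrow> nat set" where
  "positions_11 n = {j. bit n j \<and> bit n (Suc j)}"

lemma rr_eq_card_positions_11: "rr n = card (positions_11 n)"
  by (simp add: rr_def positions_11_def bit_iff_odd)

lemma finite_positions_11: "finite (positions_11 n)"
proof (rule finite_subset)
  show "positions_11 n \<subseteq> {..<n}"
  proof
    fix j assume "j \<in> positions_11 n"
    then have "2 ^ j \<le> n"
      by (auto simp: positions_11_def bit_iff_odd div_greater_zero_iff dest!: odd_pos)
    then show "j \<in> {..<n}" by (metis lessThan_iff less_exp less_le_trans)
  qed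
qed simp

lemma positions_11_double: "positions_11 (2 * n) = Suc ` positions_11 n"
proof (rule set_eqI)
  fix j show "j \<in> positions_11 (2 * n) \<longleftrightarrow> j \<in> Suc ` positions_11 n"
    by (cases j) (auto simp: positions_11_def bit_Suc bit_0)
qed

lemma positions_11_double_Suc: "positions_11 (2 * n + 1) = (if odd n then {0} else {}) \<union> Suc ` positions_11 n"
proof (rule set_eqI)
  fix j show "j \<in> positions_11 (2 * n + 1) \<longleftrightarrow> j \<in> (if odd n then {0} else {}) \<union> Suc ` positions_11 n"
    by (cases j) (auto simp: positions_11_def bit_Suc bit_0)
qed

lemma rr_double: "rr (2 * n) = rr n"
  by (simp add: rr_eq_card_positions_11 positions_11_double card_image)

lemma rr_double_Suc: "rr (2 * n + 1) = rr n + of_bool (odd n)"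
  unfolding rr_eq_card_positions_11 positions_11_double_Suc
  using finite_positions_11[of n] by (simp add: card_image image_iff)

lemma dd_0_left [simp]: "dd 0 n = 0"
  by (simp add: dd_def)

lemma dd_double_double: "dd (2 * s) (2 * n) = dd s n"
  using rr_double[of "n + s"] rr_double[of n] by (simp add: dd_def distrib_left)

lemma dd_double_double_Suc:
  "dd (2 * s) (2 * n + 1) = dd s n + of_bool (odd (n + s)) - of_bool (odd n)"
  using rr_double_Suc[of "n + s"] rr_double_Suc[of n] by (simp add: dd_def distrib_left)

lemma dd_double_Suc_double: "dd (2 * s + 1) (2 * n) = dd s n + of_bool (odd (n + s))"
  using rr_double_Suc[of "n + s"] rr_double[of n] by (simp add: dd_def distrib_left)

lemma dd_double_Suc_double_Suc: "dd (2 * s + 1) (2 * n + 1) = dd (s + 1) n - of_bool (odd n)"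
  using rr_double[of "n + (s + 1)"] rr_double_Suc[of n] by (simp add: dd_def distrib_left)

lemma dd_1_left_le: "dd 1 n \<le> 1"
proof (induction n rule: less_induct)
  case (less n)
  show ?case
  proof (cases "even n")
    case True
    then obtain m where "n = 2 * m" by blast
    then show ?thesis
      using dd_double_Suc_double[of 0 m] by simp
  next
    case False
    then obtain m where n: "n = 2 * m + 1" by (blast elim: oddE)
    then have "dd 1 m \<le> 1"
      using less.IH by simp
    then show ?thesis
      using dd_double_Suc_double_Suc[of 0 m] n by simp
  qed
qed

section \<open>Asymptotic densities\<close>

definition count_below :: "(nat \<Rightarrow> bool) \<Rightarrow> nat \<Rightarrow> nat" where
  "count_below P N = card {n. n < N \<and> P n}"

definition has_density :: "(nat \<Rightarrow> bool) \<Rightarrow> real \<Rightarrow> bool" where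
  "has_density P d \<longleftrightarrow> (\<lambda>N. real (count_below P N) / real N) \<longlonglongrightarrow> d"

lemma density_eqI: "has_density P d \<Longrightarrow> density P = d"
  unfolding has_density_def density_def count_below_def by (rule limI)

lemma count_below_0 [simp]: "count_below P 0 = 0"
  by (simp add: count_below_def)

lemma count_below_Suc: "count_below P (Suc N) = count_below P N + of_bool (P N)"
proof -
  have "{n. n < Suc N \<and> P n} = (if P N then insert N else id) {n. n < N \<and> P n}"
    by (auto simp: less_Suc_eq)
  then show ?thesis by (simp add: count_below_def)
qed

lemma count_below_double:
  "count_below P (2 * M) = count_below (\<lambda>m. P (2 * m)) M + count_below (\<lambda>m. P (2 * m + 1)) M"
  by (induction M) (simp_all add: count_below_Suc)

lemma count_below_double_Suc:
  "count_below P (2 * M + 1) = count_below (\<lambda>m. P (2 * m)) (M + 1) + count_below (\<lambda>m. P (2 * m + 1)) M"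
  using count_below_double[of P M] by (simp add: count_below_Suc)

lemma LIMSEQ_even_odd:
  fixes f :: "nat \<Rightarrow> 'a::topological_space"
  assumes "(\<lambda>n. f (2 * n)) \<longlonglongrightarrow> l" and "(\<lambda>n. f (2 * n + 1)) \<longlonglongrightarrow> l"
  shows "f \<longlonglongrightarrow> l"
proof (rule topological_tendstoI)
  fix S assume "open S" "l \<in> S"
  then have "\<forall>\<^sub>F m in sequentially. f (2 * m) \<in> S \<and> f (2 * m + 1) \<in> S"
    using assms by (intro eventually_conj topological_tendstoD)
  then obtain M where M: "\<And>m. m \<ge> M \<Longrightarrow> f (2 * m) \<in> S \<and> f (2 * m + 1) \<in> S"
    unfolding eventually_sequentially by blast
  have "f n \<in> S" if "n \<ge> 2 * M" for n
    using M[of "n div 2"] that by (cases "even n") (auto elim!: evenE oddE)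
  then show "\<forall>\<^sub>F n in sequentially. f n \<in> S"
    unfolding eventually_sequentially by blast
qed

lemma has_density_interleave:
  assumes "has_density (\<lambda>m. P (2 * m)) A" and "has_density (\<lambda>m. P (2 * m + 1)) B"
  shows "has_density P ((A + B) / 2)"
proof -
  let ?r = "\<lambda>Q N. real (count_below Q N) / real N"
  let ?e = "\<lambda>m. P (2 * m)" and ?o = "\<lambda>m. P (2 * m + 1)"
  have A: "?r ?e \<longlonglongrightarrow> A" and B: "?r ?o \<longlonglongrightarrow> B"
    using assms by (simp_all add: has_density_def)
  have "(\<lambda>M. ?r P (2 * M)) = (\<lambda>M. (?r ?e M + ?r ?o M) / 2)"
    by (simp add: count_below_double add_divide_distrib fun_eq_iff)
  also have "\<dots> \<longlonglongrightarrow> (A + B) / 2"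
    using A B by (intro tendsto_divide tendsto_add tendsto_const) simp_all
  finally have even: "(\<lambda>M. ?r P (2 * M)) \<longlonglongrightarrow> (A + B) / 2" .
  have odd_eq: "?r P (2 * M + 1) =
      ?r ?e (M + 1) * (real (M + 1) / real (2 * M + 1)) + ?r ?o M * (real M / real (2 * M + 1))" for M
  proof -
    have "?r ?e (M + 1) * (real (M + 1) / real (2 * M + 1)) = count_below ?e (M + 1) / real (2 * M + 1)"
      by (simp del: of_nat_Suc)
    moreover have "?r ?o M * (real M / real (2 * M + 1)) = count_below ?o M / real (2 * M + 1)"
      by (cases "M = 0") simp_all
    ultimately show ?thesis
      unfolding count_below_double_Suc by (simp add: add_divide_distrib del: of_nat_Suc)
  qed
  have "(\<lambda>M. ?r ?e (M + 1) * (real (M + 1) / real (2 * M + 1)) + ?r ?o M * (real M / real (2 * M + 1)))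
      \<longlonglongrightarrow> A * (1 / 2) + B * (1 / 2)"
  proof (intro tendsto_add tendsto_mult)
    show "(\<lambda>M. ?r ?e (M + 1)) \<longlonglongrightarrow> A"
      using LIMSEQ_ignore_initial_segment[OF A, of 1] by simp
    show "(\<lambda>M. real (M + 1) / real (2 * M + 1)) \<longlonglongrightarrow> 1 / 2"
      and "(\<lambda>M. real M / real (2 * M + 1)) \<longlonglongrightarrow> 1 / 2"
      by real_asymp+
  qed (fact B)
  then have odd: "(\<lambda>M. ?r P (2 * M + 1)) \<longlonglongrightarrow> (A + B) / 2"
    unfolding odd_eq by (simp add: add_divide_distrib)
  show ?thesis
    unfolding has_density_def using even odd by (rule LIMSEQ_even_odd)
qed

lemma ex_has_density_interleave:
  assumes "\<exists>A. has_density (\<lambda>m. P (2 * m)) A" and "\<exists>B. has_density (\<lambda>m. P (2 * m + 1)) B"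
  shows "\<exists>d. has_density P d"
  using assms has_density_interleave by blast

lemma has_density_const: "has_density (\<lambda>_. c) (of_bool c)"
proof -
  have "\<forall>\<^sub>F N in sequentially. of_bool c = real (count_below (\<lambda>_. c) N) / real N"
    using eventually_gt_at_top[of 0] by eventually_elim (simp add: count_below_def)
  then show ?thesis
    unfolding has_density_def by (rule Lim_transform_eventually[OF tendsto_const])
qed

lemma sum_count_below_le:
  assumes "finite F"
  shows "(\<Sum>k\<in>F. count_below (\<lambda>n. f n = k) N) \<le> N"
proof -
  have "(\<Sum>k\<in>F. count_below (\<lambda>n. f n = k) N) = card (\<Union>k\<in>F. {n. n < N \<and> f n = k})"
    unfolding count_below_def using assms by (intro card_UN_disjoint[symmetric]) auto
  also have "\<dots> \<le> card {..<N}"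
    by (intro card_mono) auto
  finally show ?thesis
    by simp
qed

lemma summable_on_densities:
  assumes dens: "\<And>k. has_density (\<lambda>n. f n = k) (d k)"
  shows "d summable_on UNIV"
proof (rule nonneg_bdd_above_summable_on)
  let ?r = "\<lambda>k N. real (count_below (\<lambda>n. f n = k) N) / real N"
  have lim: "?r k \<longlonglongrightarrow> d k" for k
    using dens by (simp add: has_density_def)
  show "0 \<le> d k" for k
    using lim by (rule LIMSEQ_le_const) simp
  have "sum d F \<le> 1" if "finite F" for F
  proof (rule LIMSEQ_le_const2)
    show "(\<lambda>N. \<Sum>k\<in>F. ?r k N) \<longlonglongrightarrow> sum d F"
      using lim by (rule tendsto_sum)
    have "(\<Sum>k\<in>F. ?r k N) \<le> 1" for N
      using sum_count_below_le[OF that, of f N]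
      by (cases "N = 0") (simp_all add: sum_divide_distrib[symmetric] divide_le_eq_1 flip: of_nat_sum)
    then show "\<exists>N0. \<forall>N\<ge>N0. (\<Sum>k\<in>F. ?r k N) \<le> 1"
      by blast
  qed
  then show "bdd_above (sum d ` {F. F \<subseteq> UNIV \<and> finite F})"
    by (intro bdd_aboveI[of _ 1]) auto
qed

section \<open>The densities a_t(k) and b_t(k)\<close>

definition a_event :: "nat \<Rightarrow> int \<Rightarrow> nat \<Rightarrow> bool" where
  "a_event t k = (\<lambda>n. dd t (2 * n) = k)"

definition b_event :: "nat \<Rightarrow> int \<Rightarrow> nat \<Rightarrow> bool" where
  "b_event t k = (\<lambda>n. dd t (2 * n + 1) = k)"

lemma events_zero: "a_event 0 k = (\<lambda>_. k = 0)" "b_event 0 k = (\<lambda>_. k = 0)"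
  by (auto simp: a_event_def b_event_def)

lemma a_event_double_halves:
  "(\<lambda>m. a_event (2 * s) k (2 * m)) = a_event s k"
  "(\<lambda>m. a_event (2 * s) k (2 * m + 1)) = b_event s k"
  by (simp_all add: a_event_def b_event_def dd_double_double)

lemma b_event_double_halves:
  "(\<lambda>m. b_event (2 * s) k (2 * m)) = a_event s (k - of_bool (odd s))"
  "(\<lambda>m. b_event (2 * s) k (2 * m + 1)) = b_event s (k - of_bool (even s) + 1)"
  using dd_double_double_Suc[of s "2 * m" for m] dd_double_double_Suc[of s "2 * m + 1" for m]
  by (auto simp: a_event_def b_event_def fun_eq_iff)

lemma a_event_double_Suc_halves:
  "(\<lambda>m. a_event (2 * s + 1) k (2 * m)) = a_event s (k - of_bool (odd s))"
  "(\<lambda>m. a_event (2 * s + 1) k (2 * m + 1)) = b_event s (k - of_bool (even s))"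
  using dd_double_Suc_double[of s "2 * m" for m] dd_double_Suc_double[of s "2 * m + 1" for m]
  by (auto simp: a_event_def b_event_def fun_eq_iff)

lemma b_event_double_Suc_halves:
  "(\<lambda>m. b_event (2 * s + 1) k (2 * m)) = a_event (s + 1) k"
  "(\<lambda>m. b_event (2 * s + 1) k (2 * m + 1)) = b_event (s + 1) (k + 1)"
  using dd_double_Suc_double_Suc[of s "2 * m" for m] dd_double_Suc_double_Suc[of s "2 * m + 1" for m]
  by (auto simp: a_event_def b_event_def fun_eq_iff)

lemma ex_has_density_a_event_one: "\<exists>d. has_density (a_event 1 k) d"
proof (rule ex_has_density_interleave)
  have "(\<lambda>m. a_event 1 k (2 * m)) = (\<lambda>_. k = 0)"
       "(\<lambda>m. a_event 1 k (2 * m + 1)) = (\<lambda>_. k = 1)"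
    using a_event_double_Suc_halves[of 0 k] by (auto simp: events_zero)
  then show "\<exists>A. has_density (\<lambda>m. a_event 1 k (2 * m)) A"
      and "\<exists>B. has_density (\<lambda>m. a_event 1 k (2 * m + 1)) B"
    using has_density_const by metis+
qed

text \<open>The recursion for b_1 refers to b_1 itself, with k + 1 in place of k; it terminates
  because d(1, n) \<le> 1.\<close>

lemma ex_has_density_b_event_one: "\<exists>d. has_density (b_event 1 k) d"
proof (induction "nat (2 - k)" arbitrary: k rule: less_induct)
  case less
  show ?case
  proof (cases "k \<ge> 2")
    case True
    then have "dd 1 (2 * n + 1) \<noteq> k" for n
      using dd_1_left_le[of "2 * n + 1"] by simp
    then have "b_event 1 k = (\<lambda>_. False)"
      by (simp add: b_event_def fun_eq_iff)
    then show ?thesis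
      using has_density_const by metis
  next
    case False
    show ?thesis
    proof (rule ex_has_density_interleave)
      have "(\<lambda>m. b_event 1 k (2 * m)) = a_event 1 k"
        using b_event_double_Suc_halves(1)[of 0 k] by simp
      then show "\<exists>A. has_density (\<lambda>m. b_event 1 k (2 * m)) A"
        using ex_has_density_a_event_one by simp
      have "(\<lambda>m. b_event 1 k (2 * m + 1)) = b_event 1 (k + 1)"
        using b_event_double_Suc_halves(2)[of 0 k] by simp
      moreover have "nat (2 - (k + 1)) < nat (2 - k)"
        using False by simp
      ultimately show "\<exists>B. has_density (\<lambda>m. b_event 1 k (2 * m + 1)) B"
        using less by simp
    qed
  qed
qed

lemma ex_has_density_events: "(\<exists>d. has_density (a_event t k) d) \<and> (\<exists>d. has_density (b_event t k) d)"
proof (induction t arbitrary: k rule: less_induct)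
  case (less t)
  consider "t = 0" | "t = 1" | s where "t = 2 * s" "s > 0" | s where "t = 2 * s + 1" "s > 0"
  proof -
    have "t = 2 * (t div 2) \<or> t = 2 * (t div 2) + 1" by presburger
    then show thesis using that by (cases "t div 2 = 0") auto
  qed
  then show ?case
  proof cases
    case 1
    show ?thesis
      unfolding \<open>t = 0\<close> events_zero using has_density_const by blast
  next
    case 2
    then show ?thesis
      using ex_has_density_a_event_one ex_has_density_b_event_one by simp
  next
    case (3 s)
    then have "s < t" by simp
    note IH = less[OF this]
    show ?thesis unfolding \<open>t = 2 * s\<close>
      by (intro conjI; rule ex_has_density_interleave)
        (simp_all only: a_event_double_halves b_event_double_halves IH)
  next
    case (4 s)
    then have "s < t" "s + 1 < t" by simp_all
    note IH = less[OF this(1)] less[OF this(2)]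
    show ?thesis unfolding \<open>t = 2 * s + 1\<close>
      by (intro conjI; rule ex_has_density_interleave)
        (simp_all only: a_event_double_Suc_halves b_event_double_Suc_halves IH)
  qed
qed

lemma a_dens_eqI: "has_density (a_event t k) d \<Longrightarrow> a_dens t k = d"
  unfolding a_dens_def a_event_def by (rule density_eqI)

lemma b_dens_eqI: "has_density (b_event t k) d \<Longrightarrow> b_dens t k = d"
  unfolding b_dens_def b_event_def by (rule density_eqI)

lemma has_density_a_dens: "has_density (a_event t k) (a_dens t k)"
  using ex_has_density_events a_dens_eqI by metis

lemma has_density_b_dens: "has_density (b_event t k) (b_dens t k)"
  using ex_has_density_events b_dens_eqI by metis

lemma summable_on_a_dens: "a_dens t summable_on UNIV"
  using has_density_a_dens unfolding a_event_def by (rule summable_on_densities)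

lemma summable_on_b_dens: "b_dens t summable_on UNIV"
  using has_density_b_dens unfolding b_event_def by (rule summable_on_densities)

lemma a_dens_zero: "a_dens 0 k = of_bool (k = 0)"
  by (rule a_dens_eqI) (simp only: events_zero has_density_const)

lemma b_dens_zero: "b_dens 0 k = of_bool (k = 0)"
  by (rule b_dens_eqI) (simp only: events_zero has_density_const)

lemma a_dens_double: "a_dens (2 * s) k = (a_dens s k + b_dens s k) / 2"
  by (rule a_dens_eqI, rule has_density_interleave)
    (simp_all only: a_event_double_halves has_density_a_dens has_density_b_dens)

lemma b_dens_double:
  "b_dens (2 * s) k = (a_dens s (k - of_bool (odd s)) + b_dens s (k - of_bool (even s) + 1)) / 2"
  by (rule b_dens_eqI, rule has_density_interleave)
    (simp_all only: b_event_double_halves has_density_a_dens has_density_b_dens)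

lemma a_dens_double_Suc:
  "a_dens (2 * s + 1) k = (a_dens s (k - of_bool (odd s)) + b_dens s (k - of_bool (even s))) / 2"
  by (rule a_dens_eqI, rule has_density_interleave)
    (simp_all only: a_event_double_Suc_halves has_density_a_dens has_density_b_dens)

lemma b_dens_double_Suc: "b_dens (2 * s + 1) k = (a_dens (s + 1) k + b_dens (s + 1) (k + 1)) / 2"
  by (rule b_dens_eqI, rule has_density_interleave)
    (simp_all only: b_event_double_Suc_halves has_density_a_dens has_density_b_dens)

section \<open>Fourier series of the densities\<close>

lemma ee_add: "ee (x + y) = ee x * ee y"
  by (simp add: ee_def distrib_left exp_add)

lemma ee_zero [simp]: "ee 0 = 1"
  by (simp add: ee_def)

lemma ee_minus: "ee (- x) = inverse (ee x)"
  by (simp add: ee_def exp_minus)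

lemma ee_mult_ee_minus: "ee x * ee (- x) = 1"
  by (simp add: ee_add[symmetric])

lemma norm_ee [simp]: "norm (ee x) = 1"
  by (simp add: ee_def)

lemma two_minus_ee_neq_zero: "2 - ee x \<noteq> 0"
proof
  assume "2 - ee x = 0"
  then have "norm (ee x) = norm (2 :: complex)"
    by simp
  then show False
    by simp
qed

definition fourier :: "(int \<Rightarrow> real) \<Rightarrow> real \<Rightarrow> complex" where
  "fourier f \<theta> = (\<Sum>\<^sub>\<infinity>k\<in>UNIV. complex_of_real (f k) * ee (real_of_int k * \<theta>))"

lemma alpha_eq_fourier: "alpha t = fourier (a_dens t)"
  by (simp add: fun_eq_iff alpha_def fourier_def)

lemma beta_eq_fourier: "beta t = fourier (b_dens t)"
  by (simp add: fun_eq_iff beta_def fourier_def)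

lemma summable_on_fourier_terms:
  assumes "f summable_on UNIV"
  shows "(\<lambda>k. complex_of_real (f k) * ee (real_of_int k * \<theta>)) summable_on UNIV"
proof (rule abs_summable_summable)
  have "(\<lambda>k. norm (f k)) summable_on UNIV"
    using assms summable_on_iff_abs_summable_on_real by blast
  then show "(\<lambda>k. norm (complex_of_real (f k) * ee (real_of_int k * \<theta>))) summable_on UNIV"
    by (simp add: norm_mult)
qed

lemma summable_on_shift:
  fixes f :: "int \<Rightarrow> 'a::{comm_monoid_add,topological_space}"
  assumes "f summable_on UNIV"
  shows "(\<lambda>k. f (k - c)) summable_on UNIV"
proof -
  have "bij_betw (\<lambda>k. k - c) UNIV UNIV"
    by (rule bij_betwI[of _ _ _ "\<lambda>j. j + c"]) auto
  then show ?thesis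
    using summable_on_reindex_bij_betw assms by blast
qed

lemma fourier_shift: "fourier (\<lambda>k. f (k - c)) \<theta> = ee (real_of_int c * \<theta>) * fourier f \<theta>"
proof -
  have shift: "bij_betw (\<lambda>j. j + c) UNIV UNIV"
    by (rule bij_betwI[of _ _ _ "\<lambda>j. j - c"]) auto
  have "fourier (\<lambda>k. f (k - c)) \<theta> =
      (\<Sum>\<^sub>\<infinity>j\<in>UNIV. complex_of_real (f (j + c - c)) * ee (real_of_int (j + c) * \<theta>))"
    unfolding fourier_def by (rule infsum_reindex_bij_betw[OF shift, symmetric])
  also have "\<dots> = (\<Sum>\<^sub>\<infinity>j\<in>UNIV.
      ee (real_of_int c * \<theta>) * (complex_of_real (f j) * ee (real_of_int j * \<theta>)))"
  proof (rule infsum_cong)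
    fix j
    have "ee (real_of_int (j + c) * \<theta>) = ee (real_of_int c * \<theta>) * ee (real_of_int j * \<theta>)"
      by (simp add: ee_add[symmetric] algebra_simps)
    then show "complex_of_real (f (j + c - c)) * ee (real_of_int (j + c) * \<theta>) =
        ee (real_of_int c * \<theta>) * (complex_of_real (f j) * ee (real_of_int j * \<theta>))"
      by (simp add: mult.left_commute)
  qed
  also have "\<dots> = ee (real_of_int c * \<theta>) * fourier f \<theta>"
    unfolding fourier_def by (rule infsum_cmult_right')
  finally show ?thesis .
qed

lemma fourier_mix:
  assumes "f summable_on UNIV" and "g summable_on UNIV"
    and "\<And>k. h k = (f (k - c) + g (k - d)) / 2"
  shows "fourier h \<theta> =
    (ee (real_of_int c * \<theta>) * fourier f \<theta> + ee (real_of_int d * \<theta>) * fourier g \<theta>) / 2"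
proof -
  let ?F = "\<lambda>k. complex_of_real (f (k - c)) * ee (real_of_int k * \<theta>)"
  let ?G = "\<lambda>k. complex_of_real (g (k - d)) * ee (real_of_int k * \<theta>)"
  have "fourier h \<theta> = (\<Sum>\<^sub>\<infinity>k\<in>UNIV. (?F k + ?G k) * (1 / 2))"
    unfolding fourier_def assms(3) by (rule infsum_cong) (simp add: field_simps)
  also have "\<dots> = (\<Sum>\<^sub>\<infinity>k\<in>UNIV. ?F k + ?G k) * (1 / 2)"
    by (rule infsum_cmult_left')
  also have "(\<Sum>\<^sub>\<infinity>k\<in>UNIV. ?F k + ?G k) =
      fourier (\<lambda>k. f (k - c)) \<theta> + fourier (\<lambda>k. g (k - d)) \<theta>"
    unfolding fourier_def
    using assms(1,2) by (intro infsum_add summable_on_fourier_terms summable_on_shift)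
  finally show ?thesis
    by (simp add: fourier_shift)
qed

lemma fourier_indicator_zero: "fourier (\<lambda>k. of_bool (k = 0)) \<theta> = 1"
proof -
  have "fourier (\<lambda>k. of_bool (k = 0)) \<theta> =
      (\<Sum>\<^sub>\<infinity>k\<in>{0}. complex_of_real (of_bool (k = 0)) * ee (real_of_int k * \<theta>))"
    unfolding fourier_def by (rule infsum_cong_neutral) auto
  then show ?thesis
    by simp
qed

lemma alpha_zero: "alpha 0 \<theta> = 1"
  by (simp add: alpha_eq_fourier a_dens_zero[abs_def] fourier_indicator_zero)

lemma beta_zero: "beta 0 \<theta> = 1"
  by (simp add: beta_eq_fourier b_dens_zero[abs_def] fourier_indicator_zero)

lemma alpha_double: "alpha (2 * s) \<theta> = (alpha s \<theta> + beta s \<theta>) / 2"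
  using fourier_mix[of "a_dens s" "b_dens s" "a_dens (2 * s)" 0 0] a_dens_double[of s]
  by (simp add: alpha_eq_fourier beta_eq_fourier summable_on_a_dens summable_on_b_dens)

lemma beta_double: "beta (2 * s) \<theta> =
    (ee (of_bool (odd s) * \<theta>) * alpha s \<theta> + ee ((of_bool (even s) - 1) * \<theta>) * beta s \<theta>) / 2"
  using fourier_mix[of "a_dens s" "b_dens s" "b_dens (2 * s)" "of_bool (odd s)" "of_bool (even s) - 1"]
    b_dens_double[of s]
  by (simp add: alpha_eq_fourier beta_eq_fourier summable_on_a_dens summable_on_b_dens)

lemma alpha_double_Suc: "alpha (2 * s + 1) \<theta> =
    (ee (of_bool (odd s) * \<theta>) * alpha s \<theta> + ee (of_bool (even s) * \<theta>) * beta s \<theta>) / 2"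
  using fourier_mix[of "a_dens s" "b_dens s" "a_dens (2 * s + 1)" "of_bool (odd s)" "of_bool (even s)"]
    a_dens_double_Suc[of s]
  by (simp add: alpha_eq_fourier beta_eq_fourier summable_on_a_dens summable_on_b_dens)

lemma beta_double_Suc: "beta (2 * s + 1) \<theta> = (alpha (s + 1) \<theta> + ee (- \<theta>) * beta (s + 1) \<theta>) / 2"
  using fourier_mix[of "a_dens (s + 1)" "b_dens (s + 1)" "b_dens (2 * s + 1)" 0 "- 1"]
    b_dens_double_Suc[of s]
  by (simp add: alpha_eq_fourier beta_eq_fourier summable_on_a_dens summable_on_b_dens)

lemma beta_double_even: "even s \<Longrightarrow> beta (2 * s) \<theta> = alpha (2 * s) \<theta>"
  by (simp add: alpha_double beta_double)

lemma beta_quadruple: "beta (4 * t) \<theta> = alpha (4 * t) \<theta>"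
  using beta_double_even[of "2 * t" \<theta>] by simp

lemma alpha_octuple: "alpha (8 * t) \<theta> = alpha (4 * t) \<theta>"
  using alpha_double[of "4 * t" \<theta>] by (simp add: beta_quadruple)

lemma beta_octuple: "beta (8 * t) \<theta> = alpha (8 * t) \<theta>"
  using beta_double_even[of "4 * t" \<theta>] by simp

lemma alpha_one: "alpha 1 \<theta> = (ee \<theta> + 1) / 2"
  using alpha_double_Suc[of 0 \<theta>] unfolding mult_0_right add_0
  by (simp add: alpha_zero beta_zero add.commute)

lemma beta_one: "beta 1 \<theta> = (ee \<theta> + 1) / (2 * (2 - ee (- \<theta>)))"
proof -
  have "beta 1 \<theta> = (alpha 1 \<theta> + ee (- \<theta>) * beta 1 \<theta>) / 2"
    using beta_double_Suc[of 0 \<theta>] unfolding mult_0_right add_0 .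
  then have "beta 1 \<theta> * (2 * (2 - ee (- \<theta>))) = ee \<theta> + 1"
    unfolding alpha_one by (simp add: field_simps)
  then show ?thesis
    using two_minus_ee_neq_zero[of "- \<theta>"] by (simp add: eq_divide_eq)
qed

lemma alpha_two: "alpha 2 \<theta> = (3 * ee \<theta> + 2 - ee (- \<theta>)) / (4 * (2 - ee (- \<theta>)))"
proof -
  have "alpha 2 \<theta> = (alpha 1 \<theta> + beta 1 \<theta>) / 2"
    using alpha_double[of 1 \<theta>] unfolding mult_1_right .
  then show ?thesis
    unfolding alpha_one beta_one using two_minus_ee_neq_zero[of "- \<theta>"] ee_mult_ee_minus[of \<theta>]
    by (simp add: field_simps, algebra)
qed

lemma beta_two:
  "beta 2 \<theta> = (2 * ee (2 * \<theta>) + ee \<theta> + ee (- \<theta>)) / (4 * (2 - ee (- \<theta>)))"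
proof -
  have "beta 2 \<theta> = (ee \<theta> * alpha 1 \<theta> + ee (- \<theta>) * beta 1 \<theta>) / 2"
    using beta_double[of 1 \<theta>] unfolding mult_1_right by simp
  moreover have "ee (2 * \<theta>) = ee \<theta> * ee \<theta>"
    using ee_add[of \<theta> \<theta>] by simp
  ultimately show ?thesis
    unfolding alpha_one beta_one using two_minus_ee_neq_zero[of "- \<theta>"] ee_mult_ee_minus[of \<theta>]
    by (simp add: field_simps, algebra)
qed

section \<open>The matrix recursion\<close>

lemma exhaust_6:
  fixes x :: 6
  shows "x = 1 \<or> x = 2 \<or> x = 3 \<or> x = 4 \<or> x = 5 \<or> x = 6"
proof (induct x)
  case (of_int z)
  then have "z = 0 \<or> z = 1 \<or> z = 2 \<or> z = 3 \<or> z = 4 \<or> z = 5" by fastforce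
  then show ?case by auto
qed

lemma forall_6: "(\<forall>i::6. P i) \<longleftrightarrow> P 1 \<and> P 2 \<and> P 3 \<and> P 4 \<and> P 5 \<and> P 6"
  by (metis exhaust_6)

lemma UNIV_6: "UNIV = {1, 2, 3, 4, 5, 6::6}"
  using exhaust_6 by auto

lemma sum_6: "sum f (UNIV::6 set) = f 1 + f 2 + f 3 + f 4 + f 5 + f 6"
  unfolding UNIV_6 by (simp add: ac_simps)

lemma vector_6 [simp]:
  "(vector [x1, x2, x3, x4, x5, x6] :: 'a::zero ^ 6) $ 1 = x1"
  "(vector [x1, x2, x3, x4, x5, x6] :: 'a::zero ^ 6) $ 2 = x2"
  "(vector [x1, x2, x3, x4, x5, x6] :: 'a::zero ^ 6) $ 3 = x3"
  "(vector [x1, x2, x3, x4, x5, x6] :: 'a::zero ^ 6) $ 4 = x4"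
  "(vector [x1, x2, x3, x4, x5, x6] :: 'a::zero ^ 6) $ 5 = x5"
  "(vector [x1, x2, x3, x4, x5, x6] :: 'a::zero ^ 6) $ 6 = x6"
  by (simp_all add: vector_def)

lemma D0_mult_vector:
  "D0 \<theta> *v vector [a, b, c, d, e, f] = vector [(a + b) / 2, (a + b) / 2, (a + ee \<theta> * b) / 2,
     (c + ee (- \<theta>) * d) / 2, (c + d) / 2, (ee \<theta> * c + ee (- \<theta>) * d) / 2]"
  unfolding vec_eq_iff forall_6
  by (simp add: D0_def Let_def matrix_vector_mult_def sum_6 add_divide_distrib ee_minus)

lemma D1_mult_vector:
  "D1 \<theta> *v vector [a, b, c, d, e, f] = vector [(c + d) / 2, (ee \<theta> * c + ee (- \<theta>) * d) / 2,
     (ee \<theta> * c + d) / 2, (e + ee (- \<theta>) * f) / 2, (e + f) / 2, (e + f) / 2]"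
  unfolding vec_eq_iff forall_6
  by (simp add: D1_def Let_def matrix_vector_mult_def sum_6 add_divide_distrib ee_minus)

lemma SS_double: "SS (2 * t) \<theta> = D0 \<theta> *v SS t \<theta>"
proof -
  have index: "2 * (2 * t) + 2 = 2 * (2 * t + 1)"
    by simp
  show ?thesis
    unfolding SS_def index D0_mult_vector
      alpha_double[of "2 * t"] beta_double[of "2 * t"] alpha_double_Suc[of "2 * t"]
      beta_double_Suc[of "2 * t"] alpha_double[of "2 * t + 1"] beta_double[of "2 * t + 1"]
    by simp
qed

lemma SS_double_Suc: "SS (2 * t + 1) \<theta> = D1 \<theta> *v SS t \<theta>"
proof -
  have index: "2 * (2 * t + 1) + 2 = 2 * (2 * t + 2)" "2 * t + 1 + 1 = 2 * t + 2"
    by simp_all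
  show ?thesis
    unfolding SS_def index D1_mult_vector
      alpha_double[of "2 * t + 1"] beta_double[of "2 * t + 1"] alpha_double_Suc[of "2 * t + 1"]
      beta_double_Suc[of "2 * t + 1"] alpha_double[of "2 * t + 2"] beta_double[of "2 * t + 2"]
    by simp
qed

lemma SS_zero: "SS 0 \<theta> = vector [1, 1, (ee \<theta> + 1) / 2,
    (ee \<theta> + 1) / (2 * (2 - ee (- \<theta>))),
    (3 * ee \<theta> + 2 - ee (- \<theta>)) / (4 * (2 - ee (- \<theta>))),
    (2 * ee (2 * \<theta>) + ee \<theta> + ee (- \<theta>)) / (4 * (2 - ee (- \<theta>)))]"
  unfolding SS_def mult_0_right add_0 alpha_zero beta_zero alpha_one beta_one alpha_two beta_two ..

theorem proposition3p3:
  shows "(\<forall>(t::nat) (\<theta>::real).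
            SS (2*t) \<theta> = D0 \<theta> *v SS t \<theta> \<and> SS (2*t+1) \<theta> = D1 \<theta> *v SS t \<theta>)
       \<and> (\<forall>\<theta>::real. SS 0 \<theta> = vector [1, 1, (ee \<theta> + 1) / 2,
              (ee \<theta> + 1) / (2 * (2 - ee (-\<theta>))),
              (3 * ee \<theta> + 2 - ee (-\<theta>)) / (4 * (2 - ee (-\<theta>))),
              (2 * ee (2*\<theta>) + ee \<theta> + ee (-\<theta>)) / (4 * (2 - ee (-\<theta>)))])
       \<and> (\<forall>t::nat. alpha (8*t) = alpha (4*t) \<and> alpha (4*t) = beta (8*t) \<and> beta (8*t) = beta (4*t))"
  using SS_double SS_double_Suc SS_zero alpha_octuple beta_octuple beta_quadruple
  by (simp add: fun_eq_iff)

end
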